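(* Let $R>0$, $K>0$. For any constant composition codebook $\mathcal{C}_n$ (all $\lfloor e^{nR}\rfloor$ codewords having the same type) and any $\epsilon>0$, \[ 1-P_e(\mathcal{C}_n\,|\,TV)\ \le\ e^{-n\left(R-I_{TV}-|B_{TV}-K|^{+}-\epsilon+o(1)\right)}, \] where $o(1)$ vanishes as $n\to\infty$ uniformly with respect to $TV$, depends on $\epsilon$, but does not depend on the choice of $\mathcal{C}_n$.
   Context: Channel model: $\mathcal{X},\mathcal{Y}$ finite alphabets, $W(y|x)$ a fixed conditional distribution. A codebook $\mathcal{C}_n$ consists of $\lfloor e^{nR}\rfloor$ codewords $\mathbf{x}_m\in\mathcal{X}^n$. A channel instance: independently for each message $m$, a cloud of $\lfloor e^{nK}\rfloor$ independent sequences $\mathbf{y}\in\mathcal{Y}^n$ whose letters are independent with $y_i\sim W(\cdot|x_{m,i})$. Messages are equiprobable; when $m$ is sent, the output is a uniformly chosen vector of the cloud of $m$. The decoder knows codebook and clouds; the ML decoder outputs a message whose cloud contains the most copies of the received vector (ties broken at random). $P_e(\mathcal{C}_n|TV)$ is the conditional error probability of the ML decoder, averaged over messages and channel instances, given that the joint type (empirical distribution) of the received block and the sent codeword is $TV$, where $T$ is the type of the received block on $\mathcal{Y}$ and $V(x|y)$ the conditional type of the codeword. Logs are natural. $I_{TV}$ is the mutual information under the joint distribution $TV$; $B_{TV}=\mathbb{E}_{TV}[-\log W(Y|X)]$; $|t|^{+}=\max\{0,t\}$. *)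

theory Defs
  imports "HOL-Analysis.Analysis"
begin

definition num_msgs :: "nat \<Rightarrow> real \<Rightarrow> nat" where
  "num_msgs n R = nat \<lfloor>exp (real n * R)\<rfloor>"

definition cloud_size :: "nat \<Rightarrow> real \<Rightarrow> nat" where
  "cloud_size n K = nat \<lfloor>exp (real n * K)\<rfloor>"

definition seq_type :: "'a list \<Rightarrow> 'a \<Rightarrow> real" where
  "seq_type xs = (\<lambda>a. real (card {i. i < length xs \<and> xs ! i = a}) / real (length xs))"

definition joint_type :: "'x list \<Rightarrow> 'y list \<Rightarrow> 'x \<times> 'y \<Rightarrow> real" where
  "joint_type xs ys = (\<lambda>(a, b). real (card {i. i < length ys \<and> xs ! i = a \<and> ys ! i = b})
                                 / real (length ys))"

definition cc_codebook :: "nat \<Rightarrow> real \<Rightarrow> (nat \<Rightarrow> 'x list) \<Rightarrow> bool" where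
  "cc_codebook n R C \<longleftrightarrow>
     (\<forall>m < num_msgs n R. length (C m) = n \<and> seq_type (C m) = seq_type (C 0))"

definition mutual_info :: "('x::finite \<times> 'y::finite \<Rightarrow> real) \<Rightarrow> real" where
  "mutual_info Q = (\<Sum>p\<in>UNIV. if Q p > 0
       then Q p * ln (Q p / ((\<Sum>b\<in>UNIV. Q (fst p, b)) * (\<Sum>a\<in>UNIV. Q (a, snd p)))) else 0)"

definition B_val :: "('x::finite \<Rightarrow> 'y::finite \<Rightarrow> real) \<Rightarrow> ('x \<times> 'y \<Rightarrow> real) \<Rightarrow> real" where
  "B_val W Q = (\<Sum>p\<in>UNIV. if Q p > 0 then - Q p * ln (W (fst p) (snd p)) else 0)"

(* channel instances: Y (m, j) is the j-th vector of the cloud of message m *)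
definition instances :: "nat \<Rightarrow> nat \<Rightarrow> nat \<Rightarrow> (nat \<times> nat \<Rightarrow> 'y list) set" where
  "instances M N n = PiE ({..<M} \<times> {..<N}) (\<lambda>_. {ys. length ys = n})"

definition inst_prob :: "('x \<Rightarrow> 'y \<Rightarrow> real) \<Rightarrow> (nat \<Rightarrow> 'x list) \<Rightarrow> nat \<Rightarrow> nat \<Rightarrow> nat
                          \<Rightarrow> (nat \<times> nat \<Rightarrow> 'y list) \<Rightarrow> real" where
  "inst_prob W C M N n Y = (\<Prod>mj\<in>{..<M} \<times> {..<N}. \<Prod>i<n. W (C (fst mj) ! i) (Y mj ! i))"

definition cloud_count :: "nat \<Rightarrow> (nat \<times> nat \<Rightarrow> 'y list) \<Rightarrow> nat \<Rightarrow> 'y list \<Rightarrow> nat" where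
  "cloud_count N Y m y = card {j. j < N \<and> Y (m, j) = y}"

(* messages the ML decoder may output *)
definition ml_set :: "nat \<Rightarrow> nat \<Rightarrow> (nat \<times> nat \<Rightarrow> 'y list) \<Rightarrow> 'y list \<Rightarrow> nat set" where
  "ml_set M N Y y = {m. m < M \<and> (\<forall>m' < M. cloud_count N Y m' y \<le> cloud_count N Y m y)}"

(* probability that the ML decoder (uniform tie-breaking) outputs m *)
definition ml_correct :: "nat \<Rightarrow> nat \<Rightarrow> (nat \<times> nat \<Rightarrow> 'y list) \<Rightarrow> 'y list \<Rightarrow> nat \<Rightarrow> real" where
  "ml_correct M N Y y m = (if m \<in> ml_set M N Y y then 1 / real (card (ml_set M N Y y)) else 0)"

(* probability that the joint type of received block and sent codeword equals Q *)
definition event_prob :: "('x \<Rightarrow> 'y \<Rightarrow> real) \<Rightarrow> nat \<Rightarrow> real \<Rightarrow> real \<Rightarrow> (nat \<Rightarrow> 'x list)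
                          \<Rightarrow> ('x \<times> 'y \<Rightarrow> real) \<Rightarrow> real" where
  "event_prob W n R K C Q =
     (let M = num_msgs n R; N = cloud_size n K in
      (\<Sum>m<M. \<Sum>j<N. \<Sum>Y\<in>instances M N n.
          if joint_type (C m) (Y (m, j)) = Q
          then inst_prob W C M N n Y / (real M * real N) else 0))"

definition correct_event_prob :: "('x \<Rightarrow> 'y \<Rightarrow> real) \<Rightarrow> nat \<Rightarrow> real \<Rightarrow> real \<Rightarrow> (nat \<Rightarrow> 'x list)
                          \<Rightarrow> ('x \<times> 'y \<Rightarrow> real) \<Rightarrow> real" where
  "correct_event_prob W n R K C Q =
     (let M = num_msgs n R; N = cloud_size n K in
      (\<Sum>m<M. \<Sum>j<N. \<Sum>Y\<in>instances M N n.
          if joint_type (C m) (Y (m, j)) = Q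
          then inst_prob W C M N n Y / (real M * real N) * ml_correct M N Y (Y (m, j)) m
          else 0))"

definition Pe_cond :: "('x \<Rightarrow> 'y \<Rightarrow> real) \<Rightarrow> nat \<Rightarrow> real \<Rightarrow> real \<Rightarrow> (nat \<Rightarrow> 'x list)
                          \<Rightarrow> ('x \<times> 'y \<Rightarrow> real) \<Rightarrow> real" where
  "Pe_cond W n R K C Q = 1 - correct_event_prob W n R K C Q / event_prob W n R K C Q"

end

theory Submission
  imports Defs "HOL-Combinatorics.Multiset_Permutations" "HOL-Real_Asymp.Real_Asymp"
begin

text \<open>
  Because the codebook has
  constant composition, the outputs \<open>y\<close> forming joint type \<open>Q\<close> with a codeword form a conditional
  type class of the same size \<open>G\<close> for every message, and each of them has probability
  \<open>P = exp (- n B\<^sub>T\<^sub>V)\<close>; hence the event has probability \<open>G P\<close>.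
  A copy of \<open>y\<close> in the cloud of \<open>m\<close> is decoded correctly only if no other cloud contains \<open>y\<close> more
  often, so for each received word the expected number of correct decodings is at most
  \<open>E max\<^sub>m count\<^sub>m \<le> t + \<Sum>\<^sub>m E exp (count\<^sub>m - t)\<close>. The binomial moment generating function
  \<open>E exp (count\<^sub>m) \<le> exp ((e - 1) P N)\<close> and the choice \<open>t = (e - 1) P N + ln M\<close> make this \<open>t + 1\<close>.
  Only the words of the output type class \<open>T\<close> contribute, and Stirling's bounds on multinomial
  coefficients give \<open>|T| / G \<le> exp (n I\<^sub>T\<^sub>V + O(log n))\<close>; with \<open>M \<approx> e\<^sup>n\<^sup>R\<close> and
  \<open>N \<approx> e\<^sup>n\<^sup>K\<close> the bound follows.
\<close>

section \<open>Stirling bounds and the size of type classes\<close>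

definition xlnx :: "nat \<Rightarrow> real" where
  "xlnx k = real k * ln (real k)"

lemma power_le_fact_mult_exp: "real k ^ k \<le> fact k * exp (real k)"
proof -
  have "real k ^ k / fact k \<le> exp (real k)"
    using sum_le_suminf[OF summable_exp_generic[of "real k"], of "{k}"]
    by (simp add: exp_def divide_inverse mult.commute)
  then show ?thesis by (simp add: divide_le_eq mult.commute)
qed

lemma fact_mult_exp_le: "k \<ge> 1 \<Longrightarrow> fact k * exp (real k) \<le> exp 1 * real k ^ (k + 1)"
proof (induction k rule: dec_induct)
  case base
  then show ?case by simp
next
  case (step k)
  then have k_pos: "real k > 0" by simp
  have "1 / (real k + 1) \<le> - ln (1 - 1 / (real k + 1))"
    using ln_le_minus_one[of "1 - 1 / (real k + 1)"] k_pos by (simp add: field_simps)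
  also have "- ln (1 - 1 / (real k + 1)) = ln ((real k + 1) / real k)"
    using k_pos by (simp add: field_simps ln_div)
  finally have "exp 1 \<le> exp ((real k + 1) * ln ((real k + 1) / real k))"
    using k_pos by (simp add: field_simps)
  also have "\<dots> = ((real k + 1) / real k) ^ (k + 1)"
    using exp_of_nat_mult[of "k + 1" "ln ((real k + 1) / real k)"] k_pos by (simp add: ac_simps)
  finally have e_le: "exp 1 * real k ^ (k + 1) \<le> (real k + 1) ^ (k + 1)"
    using k_pos by (simp add: power_divide field_simps)
  have "fact (Suc k) * exp (real (Suc k)) = (real k + 1) * exp 1 * (fact k * exp (real k))"
    by (simp add: exp_add[symmetric] algebra_simps)
  also have "\<dots> \<le> (real k + 1) * exp 1 * (exp 1 * real k ^ (k + 1))"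
    using step.IH by (intro mult_left_mono) auto
  also have "\<dots> \<le> (real k + 1) * exp 1 * (real k + 1) ^ (k + 1)"
    using e_le by (intro mult_left_mono) auto
  also have "\<dots> = exp 1 * real (Suc k) ^ (Suc k + 1)"
    by (simp add: algebra_simps)
  finally show ?case .
qed

lemma ln_fact_ge: "xlnx k - real k \<le> ln (fact k)"
proof (cases "k = 0")
  case False
  then have "ln (real k ^ k) \<le> ln (fact k * exp (real k))"
    using power_le_fact_mult_exp[of k] by (subst ln_le_cancel_iff) auto
  then show ?thesis
    using False by (simp add: ln_mult ln_realpow xlnx_def)
qed (simp add: xlnx_def)

lemma ln_fact_le: "ln (fact k) \<le> xlnx k - real k + 1 + ln (real k + 1)"
proof (cases "k = 0")
  case False
  then have "ln (fact k * exp (real k)) \<le> ln (exp 1 * real k ^ (k + 1))"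
    using fact_mult_exp_le[of k] by (subst ln_le_cancel_iff) auto
  then have "ln (fact k) + real k \<le> 1 + (real k + 1) * ln (real k)"
    using False by (simp add: ln_mult ln_realpow algebra_simps)
  moreover have "ln (real k) \<le> ln (real k + 1)"
    using False by simp
  ultimately show ?thesis
    by (simp add: xlnx_def algebra_simps)
qed (simp add: xlnx_def)

lemma size_eq_sum_count_UNIV: "size (A :: 'a::finite multiset) = (\<Sum>a\<in>UNIV. count A a)"
  unfolding size_multiset_overloaded_eq
  by (rule sum.mono_neutral_left) (auto simp: not_in_iff)

lemma card_permutations_of_multiset_UNIV:
  fixes A :: "'a::finite multiset"
  shows "real (card (permutations_of_multiset A)) = fact (size A) / (\<Prod>a\<in>UNIV. fact (count A a))"
proof -
  have "(\<Prod>a\<in>UNIV. fact (count A a) :: real) = (\<Prod>a\<in>set_mset A. fact (count A a))"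
    by (rule prod.mono_neutral_right) (auto simp: not_in_iff)
  moreover have "real (card (permutations_of_multiset A)) * (\<Prod>a\<in>set_mset A. fact (count A a))
      = fact (size A)"
    using arg_cong[OF card_permutations_of_multiset_aux[of A], of real] by simp
  ultimately show ?thesis
    by (simp add: field_simps)
qed

lemma ln_card_permutations_of_multiset:
  fixes A :: "'a::finite multiset"
  shows "ln (card (permutations_of_multiset A))
    = ln (fact (size A)) - (\<Sum>a\<in>UNIV. ln (fact (count A a)))"
  unfolding card_permutations_of_multiset_UNIV
  by (simp add: ln_div ln_prod)

lemma ln_card_permutations_of_multiset_le:
  fixes A :: "'a::finite multiset"
  shows "ln (card (permutations_of_multiset A))
    \<le> xlnx (size A) - (\<Sum>a\<in>UNIV. xlnx (count A a)) + 1 + ln (real (size A) + 1)"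
proof -
  have "ln (card (permutations_of_multiset A))
      \<le> (xlnx (size A) - real (size A) + 1 + ln (real (size A) + 1))
        - (\<Sum>a\<in>UNIV. xlnx (count A a) - real (count A a))"
    unfolding ln_card_permutations_of_multiset
    by (intro diff_mono ln_fact_le sum_mono ln_fact_ge)
  then show ?thesis
    by (simp add: sum_subtractf size_eq_sum_count_UNIV)
qed

lemma ln_card_permutations_of_multiset_ge:
  fixes A :: "'a::finite multiset"
  shows "xlnx (size A) - (\<Sum>a\<in>UNIV. xlnx (count A a)) - CARD('a) * (1 + ln (real (size A) + 1))
    \<le> ln (card (permutations_of_multiset A))"
proof -
  have "(\<Sum>a\<in>UNIV. ln (real (count A a) + 1)) \<le> (\<Sum>a\<in>(UNIV::'a set). ln (real (size A) + 1))"
    using count_le_size by (intro sum_mono) auto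
  moreover have "(xlnx (size A) - real (size A))
      - (\<Sum>a\<in>UNIV. xlnx (count A a) - real (count A a) + 1 + ln (real (count A a) + 1))
      \<le> ln (card (permutations_of_multiset A))"
    unfolding ln_card_permutations_of_multiset
    by (intro diff_mono ln_fact_le sum_mono ln_fact_ge)
  ultimately show ?thesis
    by (simp add: sum_subtractf sum.distrib size_eq_sum_count_UNIV algebra_simps)
qed

section \<open>Conditional type classes\<close>

definition fiber :: "('a \<times> 'b) multiset \<Rightarrow> 'a \<Rightarrow> 'b multiset" where
  "fiber Cm a = image_mset snd (filter_mset (\<lambda>p. fst p = a) Cm)"

lemma count_fiber [simp]: "count (fiber Cm a) b = count Cm (a, b)"
  by (induction Cm) (auto simp: fiber_def)

lemma in_fiber_iff [simp]: "b \<in># fiber Cm a \<longleftrightarrow> (a, b) \<in># Cm"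
  by (simp only: count_greater_zero_iff[symmetric] count_fiber)

lemma fiber_diff_singleton:
  "(a, b) \<in># Cm \<Longrightarrow> fiber (Cm - {#(a, b)#}) a' = (if a' = a then fiber Cm a - {#b#} else fiber Cm a')"
  by (auto simp: multiset_eq_iff)

lemma sum_card_permutations_of_multiset_remove:
  assumes "A \<noteq> {#}"
  shows "(\<Sum>b\<in>set_mset A. card (permutations_of_multiset (A - {#b#})))
    = card (permutations_of_multiset A)"
  unfolding permutations_of_multiset_nonempty[OF assms]
  by (subst card_UN_disjoint) (auto simp: card_image)

lemma finite_conditional_type_class: "finite {u. length u = length x \<and> mset (zip x u) = Cm}"
proof (rule finite_subset)
  show "{u. length u = length x \<and> mset (zip x u) = Cm}
    \<subseteq> {u. set u \<subseteq> snd ` set_mset Cm \<and> length u = length x}"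
    by (force simp: set_zip in_set_conv_nth)
qed (simp add: finite_lists_length_eq)

lemma conditional_type_class_Cons:
  "{u. length u = length (a # x) \<and> mset (zip (a # x) u) = Cm}
     = (\<Union>b\<in>set_mset (fiber Cm a).
          (#) b ` {u. length u = length x \<and> mset (zip x u) = Cm - {#(a, b)#}})"
    (is "?S = ?T")
proof (intro set_eqI iffI)
  fix u assume "u \<in> ?S"
  then obtain b u' where
    "u = b # u'" "length u' = length x" "add_mset (a, b) (mset (zip x u')) = Cm"
    by (auto simp: length_Suc_conv)
  then show "u \<in> ?T"
    by (intro UN_I[of b] image_eqI[of _ _ u']) auto
next
  fix u assume "u \<in> ?T"
  then obtain b u' where "(a, b) \<in># Cm" "u = b # u'" "length u' = length x"
      "mset (zip x u') = Cm - {#(a, b)#}"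
    by auto
  then show "u \<in> ?S"
    by (simp add: insert_DiffM)
qed

lemma card_conditional_type_class:
  fixes x :: "'a::finite list" and Cm :: "('a \<times> 'b) multiset"
  assumes "mset x = image_mset fst Cm"
  shows "card {u. length u = length x \<and> mset (zip x u) = Cm}
           = (\<Prod>a\<in>UNIV. card (permutations_of_multiset (fiber Cm a)))"
  using assms
proof (induction x arbitrary: Cm)
  case Nil
  then show ?case
    by (simp add: fiber_def)
next
  case (Cons a x)
  let ?P = "\<lambda>A. card (permutations_of_multiset A)"
  have "a \<in># image_mset fst Cm"
    by (simp flip: Cons.prems)
  then obtain b0 where "(a, b0) \<in># Cm"
    by auto
  then have fiber_a: "fiber Cm a \<noteq> {#}"
    by (metis in_fiber_iff empty_iff set_mset_empty)
  have IH: "card {u. length u = length x \<and> mset (zip x u) = Cm - {#(a, b)#}}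
      = ?P (fiber Cm a - {#b#}) * (\<Prod>a'\<in>UNIV - {a}. ?P (fiber Cm a'))"
    if "b \<in># fiber Cm a" for b
  proof -
    have ab: "(a, b) \<in># Cm"
      using that by simp
    then have "mset x = image_mset fst (Cm - {#(a, b)#})"
      by (simp add: image_mset_Diff flip: Cons.prems)
    then have "card {u. length u = length x \<and> mset (zip x u) = Cm - {#(a, b)#}}
        = (\<Prod>a'\<in>UNIV. ?P (fiber (Cm - {#(a, b)#}) a'))"
      by (rule Cons.IH)
    also have "\<dots> = ?P (fiber Cm a - {#b#}) * (\<Prod>a'\<in>UNIV - {a}. ?P (fiber Cm a'))"
      unfolding fiber_diff_singleton[OF ab]
      by (subst prod.remove[of UNIV a]) (auto intro!: prod.cong)
    finally show ?thesis .
  qed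
  have "card {u. length u = length (a # x) \<and> mset (zip (a # x) u) = Cm}
      = (\<Sum>b\<in>set_mset (fiber Cm a).
          card {u. length u = length x \<and> mset (zip x u) = Cm - {#(a, b)#}})"
    unfolding conditional_type_class_Cons
    by (subst card_UN_disjoint) (auto simp: card_image finite_conditional_type_class)
  also have "\<dots> = ?P (fiber Cm a) * (\<Prod>a'\<in>UNIV - {a}. ?P (fiber Cm a'))"
    by (simp add: IH sum_card_permutations_of_multiset_remove[OF fiber_a] flip: sum_distrib_right)
  also have "\<dots> = (\<Prod>a'\<in>UNIV. ?P (fiber Cm a'))"
    by (simp add: prod.remove[of UNIV a])
  finally show ?case .
qed

section \<open>Joint types and information quantities\<close>

lemma count_mset_eq_card: "count (mset z) c = card {i. i < length z \<and> z ! i = c}"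
  by (simp add: count_mset count_list_eq_length_filter length_filter_conv_card eq_commute)

lemma joint_type_eq_count:
  assumes "length x = n" "length y = n"
  shows "joint_type x y = (\<lambda>p. real (count (mset (zip x y)) p) / real n)"
proof -
  have "card {i. i < length y \<and> x ! i = a \<and> y ! i = b} = count (mset (zip x y)) (a, b)" for a b
    unfolding count_mset_eq_card using assms by (intro arg_cong[where f = card]) auto
  then show ?thesis
    unfolding joint_type_def using assms by (auto simp: fun_eq_iff)
qed

lemma joint_type_eq_iff_mset_zip:
  assumes "length x = n" "length y = n" "n > 0"
  shows "joint_type x y = (\<lambda>p. real (count Cm p) / real n) \<longleftrightarrow> mset (zip x y) = Cm"
  unfolding joint_type_eq_count[OF assms(1,2)] using assms(3)
  by (auto simp: fun_eq_iff multiset_eq_iff)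

lemma seq_type_eq_imp_mset_eq:
  assumes "length x = n" "length x' = n" "n > 0" "seq_type x = seq_type x'"
  shows "mset x = mset x'"
proof -
  have "real (count (mset x) a) / real n = real (count (mset x') a) / real n" for a
    using fun_cong[OF assms(4), of a] assms(1,2) unfolding seq_type_def count_mset_eq_card by simp
  then show ?thesis
    using assms(3) by (auto simp: multiset_eq_iff)
qed

lemma count_image_mset_snd:
  "count (image_mset snd Cm) b = (\<Sum>a\<in>(UNIV::'a::finite set). count Cm (a, b))"
proof (induction Cm)
  case (add p Cm)
  have "(\<Sum>a\<in>UNIV. count (add_mset p Cm) (a, b))
      = (\<Sum>a\<in>UNIV. count Cm (a, b) + (if p = (a, b) then 1 else 0))"
    by (intro sum.cong) auto
  also have "\<dots> = (\<Sum>a\<in>UNIV. count Cm (a, b)) + (if snd p = b then 1 else 0)"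
    by (cases p) (auto simp: sum.distrib)
  finally show ?case
    using add by simp
qed simp

lemma size_fiber: "size (fiber Cm a) = (\<Sum>b\<in>(UNIV::'b::finite set). count Cm (a, b))"
  by (simp add: size_eq_sum_count_UNIV)

lemma sum_UNIV_prod:
  "(\<Sum>p\<in>(UNIV::('a::finite \<times> 'b::finite) set). f p) = (\<Sum>a\<in>UNIV. \<Sum>b\<in>UNIV. f (a, b))"
  by (simp add: sum.cartesian_product flip: UNIV_Times_UNIV)

lemma mutual_info_eq_sum_ln:
  fixes Cm :: "('x::finite \<times> 'y::finite) multiset"
  defines "n \<equiv> size Cm"
  assumes "n > 0"
  shows "real n * mutual_info (\<lambda>p. real (count Cm p) / real n)
       = (\<Sum>p\<in>UNIV. real (count Cm p) * (ln (count Cm p) + ln n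
            - ln (size (fiber Cm (fst p))) - ln (count (image_mset snd Cm) (snd p))))"
proof -
  define s where "s a = size (fiber Cm a)" for a
  define t where "t b = count (image_mset snd Cm) b" for b
  have "(if real (count Cm p) / real n > 0
        then real (count Cm p) / real n * ln (real (count Cm p) / real n /
          ((\<Sum>b\<in>UNIV. real (count Cm (fst p, b)) / real n)
            * (\<Sum>a\<in>UNIV. real (count Cm (a, snd p)) / real n)))
        else 0)
      = real (count Cm p) * (ln (count Cm p) + ln n - ln (s (fst p)) - ln (t (snd p))) / real n"
    for p
  proof (cases "count Cm p > 0")
    case True
    obtain a b where p: "p = (a, b)" by force
    have s_sum: "(\<Sum>b'\<in>UNIV. real (count Cm (a, b')) / real n) = real (s a) / real n"
      unfolding s_def size_fiber by (simp add: sum_divide_distrib)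
    have t_sum: "(\<Sum>a'\<in>UNIV. real (count Cm (a', b)) / real n) = real (t b) / real n"
      unfolding t_def count_image_mset_snd by (simp add: sum_divide_distrib)
    have kab: "0 < count Cm (a, b)"
      using True p by simp
    have pos: "s a > 0" "t b > 0"
      unfolding s_def t_def size_fiber count_image_mset_snd
      using order.strict_trans2[OF kab member_le_sum[of b UNIV "\<lambda>b. count Cm (a, b)"]]
        order.strict_trans2[OF kab member_le_sum[of a UNIV "\<lambda>a. count Cm (a, b)"]]
      by simp_all
    have "real (count Cm p) / real n / (real (s a) / real n * (real (t b) / real n))
        = real (count Cm p) * real n / (real (s a) * real (t b))"
      using assms(2) pos by (simp add: field_simps)
    moreover have "ln (real (count Cm p) * real n / (real (s a) * real (t b)))
        = ln (count Cm p) + ln n - ln (s a) - ln (t b)"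
      using assms(2) pos True by (simp add: ln_div ln_mult)
    ultimately show ?thesis
      using True assms(2) p s_sum t_sum by simp
  qed (simp add: not_in_iff)
  then show ?thesis
    unfolding mutual_info_def s_def t_def using assms(2) by (simp add: sum_distrib_left)
qed

lemma mutual_info_counts:
  fixes Cm :: "('x::finite \<times> 'y::finite) multiset"
  defines "n \<equiv> size Cm"
  assumes "n > 0"
  shows "real n * mutual_info (\<lambda>p. real (count Cm p) / real n)
       = (\<Sum>p\<in>UNIV. xlnx (count Cm p)) + xlnx n
         - (\<Sum>a\<in>UNIV. xlnx (size (fiber Cm a))) - (\<Sum>b\<in>UNIV. xlnx (count (image_mset snd Cm) b))"
proof -
  define k where "k = count Cm"
  define s where "s a = size (fiber Cm a)" for a
  define t where "t b = count (image_mset snd Cm) b" for b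
  have sum_k: "(\<Sum>p\<in>UNIV. real (k p)) = real n"
    unfolding n_def k_def size_eq_sum_count_UNIV by simp
  have s_sum: "real (s a) = (\<Sum>b\<in>UNIV. real (k (a, b)))" for a
    unfolding s_def size_fiber k_def by simp
  have t_sum: "real (t b) = (\<Sum>a\<in>UNIV. real (k (a, b)))" for b
    unfolding t_def count_image_mset_snd k_def by simp
  have "real n * mutual_info (\<lambda>p. real (k p) / real n)
      = (\<Sum>p\<in>UNIV. real (k p)
          * (ln (real (k p)) + ln (real n) - ln (real (s (fst p))) - ln (real (t (snd p)))))"
    unfolding k_def s_def t_def n_def using mutual_info_eq_sum_ln[of Cm] assms(2)
    by (simp add: n_def)
  also have "\<dots> = (\<Sum>p\<in>UNIV. xlnx (k p)) + real n * ln (real n)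
       - (\<Sum>p\<in>UNIV. real (k p) * ln (real (s (fst p))))
       - (\<Sum>p\<in>UNIV. real (k p) * ln (real (t (snd p))))"
    using sum_k by (simp add: sum_subtractf sum.distrib distrib_left right_diff_distrib xlnx_def
        flip: sum_distrib_right)
  also have "(\<Sum>p\<in>UNIV. real (k p) * ln (real (s (fst p)))) = (\<Sum>a\<in>UNIV. xlnx (s a))"
    unfolding sum_UNIV_prod xlnx_def s_sum by (simp add: sum_distrib_right)
  also have "(\<Sum>p\<in>UNIV. real (k p) * ln (real (t (snd p)))) = (\<Sum>b\<in>UNIV. xlnx (t b))"
    unfolding sum_UNIV_prod xlnx_def t_sum
    by (subst sum.swap) (simp add: sum_distrib_right)
  finally show ?thesis
    unfolding k_def s_def t_def xlnx_def by simp
qed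

lemma size_fiber_le: "size (fiber Cm a) \<le> size Cm"
  unfolding fiber_def by (simp add: size_filter_mset_lesseq)

lemma ln_card_type_classes_le_mutual_info:
  fixes Cm :: "('x::finite \<times> 'y::finite) multiset"
  defines "n \<equiv> size Cm"
  assumes "n > 0"
  shows "ln (card (permutations_of_multiset (image_mset snd Cm)))
           - (\<Sum>a\<in>UNIV. ln (card (permutations_of_multiset (fiber Cm a))))
         \<le> real n * mutual_info (\<lambda>p. real (count Cm p) / real n)
           + (1 + real (CARD('x) * CARD('y))) * (1 + ln (real n + 1))"
proof -
  have "ln (card (permutations_of_multiset (image_mset snd Cm)))
      \<le> xlnx n - (\<Sum>b\<in>UNIV. xlnx (count (image_mset snd Cm) b)) + 1 + ln (real n + 1)"
    using ln_card_permutations_of_multiset_le[of "image_mset snd Cm"] by (simp add: n_def)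
  moreover have "xlnx (size (fiber Cm a)) - (\<Sum>b\<in>UNIV. xlnx (count Cm (a, b)))
        - CARD('y) * (1 + ln (real n + 1))
      \<le> ln (card (permutations_of_multiset (fiber Cm a)))" for a
  proof -
    have "real CARD('y) * (1 + ln (real (size (fiber Cm a)) + 1))
        \<le> CARD('y) * (1 + ln (real n + 1))"
      using size_fiber_le[of Cm a] by (intro mult_left_mono) (auto simp: n_def)
    then show ?thesis
      using ln_card_permutations_of_multiset_ge[of "fiber Cm a"] unfolding count_fiber by linarith
  qed
  then have "(\<Sum>a\<in>UNIV. xlnx (size (fiber Cm a)) - (\<Sum>b\<in>UNIV. xlnx (count Cm (a, b)))
        - CARD('y) * (1 + ln (real n + 1)))
      \<le> (\<Sum>a\<in>UNIV. ln (card (permutations_of_multiset (fiber Cm a))))"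
    by (rule sum_mono)
  then have "(\<Sum>a\<in>UNIV. xlnx (size (fiber Cm a))) - (\<Sum>p\<in>UNIV. xlnx (count Cm p))
        - real (CARD('x) * CARD('y)) * (1 + ln (real n + 1))
      \<le> (\<Sum>a\<in>UNIV. ln (card (permutations_of_multiset (fiber Cm a))))"
    by (simp add: sum_subtractf sum_UNIV_prod mult.assoc)
  ultimately show ?thesis
    using mutual_info_counts[of Cm] assms(2) unfolding n_def[symmetric] by (simp add: algebra_simps)
qed

section \<open>The memoryless channel and random channel instances\<close>

definition channel_prob :: "('x \<Rightarrow> 'y \<Rightarrow> real) \<Rightarrow> nat \<Rightarrow> 'x list \<Rightarrow> 'y list \<Rightarrow> real" where
  "channel_prob W n x u = (\<Prod>i<n. W (x ! i) (u ! i))"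

lemma finite_lists_length: "finite {u :: 'a::finite list. length u = n}"
  using finite_lists_length_eq[of "UNIV :: 'a set" n] by simp

lemma sum_lists_length_prod:
  "(\<Sum>u\<in>{u :: 'a::finite list. length u = n}. \<Prod>i<n. f i (u ! i)) = (\<Prod>i<n. \<Sum>a\<in>UNIV. (f i a :: real))"
proof (induction n arbitrary: f)
  case (Suc n)
  have lists_Suc: "{u :: 'a list. length u = Suc n} = case_prod (#) ` (UNIV \<times> {u. length u = n})"
    by (auto simp: length_Suc_conv)
  have "(\<Sum>u\<in>{u :: 'a list. length u = Suc n}. \<Prod>i<Suc n. f i (u ! i))
      = (\<Sum>(a, u)\<in>UNIV \<times> {u :: 'a list. length u = n}. f 0 a * (\<Prod>i<n. f (Suc i) (u ! i)))"
    unfolding lists_Suc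
  proof (subst sum.reindex, force simp: inj_on_def, rule sum.cong[OF refl])
    fix au :: "'a \<times> 'a list"
    show "((\<lambda>u. \<Prod>i<Suc n. f i (u ! i)) \<circ> case_prod (#)) au
        = (case au of (a, u) \<Rightarrow> f 0 a * (\<Prod>i<n. f (Suc i) (u ! i)))"
      by (cases au)
        (simp only: o_def case_prod_conv prod.lessThan_Suc_shift nth_Cons_0 nth_Cons_Suc)
  qed
  also have "\<dots> = (\<Sum>a\<in>UNIV. f 0 a) * (\<Sum>u\<in>{u :: 'a list. length u = n}. \<Prod>i<n. f (Suc i) (u ! i))"
    by (simp add: sum_product sum.cartesian_product)
  also have "\<dots> = (\<Sum>a\<in>UNIV. f 0 a) * (\<Prod>i<n. \<Sum>a\<in>UNIV. f (Suc i) a)"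
    using Suc.IH[of "\<lambda>i. f (Suc i)"] by simp
  also have "\<dots> = (\<Prod>i<Suc n. \<Sum>a\<in>UNIV. f i a)"
    by (rule prod.lessThan_Suc_shift[symmetric])
  finally show ?case .
qed simp

lemma channel_prob_nonneg: "(\<And>x y. W x y \<ge> 0) \<Longrightarrow> channel_prob W n x u \<ge> 0"
  unfolding channel_prob_def by (intro prod_nonneg) auto

lemma sum_channel_prob:
  fixes W :: "'x \<Rightarrow> 'y::finite \<Rightarrow> real"
  assumes "\<And>x. (\<Sum>y\<in>UNIV. W x y) = 1"
  shows "(\<Sum>u\<in>{u. length u = n}. channel_prob W n x u) = 1"
  unfolding channel_prob_def using sum_lists_length_prod[where f = "\<lambda>i. W (x ! i)" and n = n]
  by (simp add: assms)

lemma prod_nth_eq_prod_power_count: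
  fixes f :: "'a::finite \<Rightarrow> 'b::comm_monoid_mult"
  shows "(\<Prod>i<length z. f (z ! i)) = (\<Prod>a\<in>UNIV. f a ^ count (mset z) a)"
proof (induction z)
  case (Cons c z)
  have "(\<Prod>i<length (c # z). f ((c # z) ! i)) = f c * (\<Prod>i<length z. f (z ! i))"
    by (simp only: length_Cons prod.lessThan_Suc_shift nth_Cons_0 nth_Cons_Suc)
  also have "(\<Prod>i<length z. f (z ! i)) = (\<Prod>a\<in>UNIV. f a ^ count (mset z) a)"
    by (rule Cons.IH)
  also have "f c * \<dots> = (\<Prod>a\<in>UNIV. f a ^ count (mset z) a * (if a = c then f c else 1))"
    by (simp add: prod.distrib prod.delta ac_simps)
  also have "\<dots> = (\<Prod>a\<in>UNIV. f a ^ count (mset (c # z)) a)"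
    by (rule prod.cong) (auto simp: power_commutes)
  finally show ?case .
qed simp

lemma channel_prob_eq_prod_power_count:
  fixes W :: "'x::finite \<Rightarrow> 'y::finite \<Rightarrow> real"
  assumes "length x = n" "length u = n"
  shows "channel_prob W n x u = (\<Prod>p\<in>UNIV. case_prod W p ^ count (mset (zip x u)) p)"
proof -
  have "channel_prob W n x u = (\<Prod>i<length (zip x u). case_prod W (zip x u ! i))"
    unfolding channel_prob_def using assms by (intro prod.cong) auto
  then show ?thesis
    by (simp only: prod_nth_eq_prod_power_count)
qed

lemma channel_prob_joint_type:
  fixes W :: "'x::finite \<Rightarrow> 'y::finite \<Rightarrow> real"
  assumes "length x = n" "length u = n" "n > 0" "joint_type x u = (\<lambda>p. real (count Cm p) / real n)"
  shows "channel_prob W n x u = (\<Prod>p\<in>UNIV. case_prod W p ^ count Cm p)"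
  using assms by (simp add: joint_type_eq_iff_mset_zip channel_prob_eq_prod_power_count)

lemma prod_power_count_eq_exp_B_val:
  fixes W :: "'x::finite \<Rightarrow> 'y::finite \<Rightarrow> real" and Cm :: "('x \<times> 'y) multiset"
  defines "n \<equiv> size Cm"
  assumes W_nonneg: "\<And>x y. W x y \<ge> 0" and pos: "(\<Prod>p\<in>UNIV. case_prod W p ^ count Cm p) > 0"
    and "n > 0"
  shows "(\<Prod>p\<in>UNIV. case_prod W p ^ count Cm p)
    = exp (- (real n * B_val W (\<lambda>p. real (count Cm p) / real n)))"
proof -
  have W_pos: "case_prod W p > 0" if "count Cm p > 0" for p
  proof (rule ccontr)
    assume "\<not> case_prod W p > 0"
    then have "case_prod W p = 0"
      using W_nonneg by (cases p) (auto simp: not_less order.antisym)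
    then have "(\<Prod>p\<in>UNIV. case_prod W p ^ count Cm p) = 0"
      using that by (intro prod_zero bexI[of _ p]) auto
    then show False
      using pos by linarith
  qed
  have "case_prod W p ^ count Cm p = exp (real (count Cm p) * ln (case_prod W p))" for p
  proof (cases "count Cm p > 0")
    case True
    then show ?thesis
      using W_pos[OF True] exp_of_nat_mult[of "count Cm p" "ln (case_prod W p)"] by simp
  qed (simp add: not_in_iff)
  then have "(\<Prod>p\<in>UNIV. case_prod W p ^ count Cm p)
      = exp (\<Sum>p\<in>UNIV. real (count Cm p) * ln (case_prod W p))"
    by (simp add: exp_sum)
  moreover have "real n * B_val W (\<lambda>p. real (count Cm p) / real n)
      = - (\<Sum>p\<in>UNIV. real (count Cm p) * ln (case_prod W p))"
    unfolding B_val_def using assms(4)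
    by (auto simp: sum_distrib_left sum_negf[symmetric] zero_less_divide_iff not_in_iff
        intro!: sum.cong split: prod.splits)
  ultimately show ?thesis
    by simp
qed

lemma inst_prob_eq_prod_channel_prob:
  "inst_prob W C M N n Y = (\<Prod>d\<in>{..<M} \<times> {..<N}. channel_prob W n (C (fst d)) (Y d))"
  unfolding inst_prob_def channel_prob_def by simp

lemma inst_prob_nonneg: "(\<And>x y. W x y \<ge> 0) \<Longrightarrow> inst_prob W C M N n Y \<ge> 0"
  unfolding inst_prob_eq_prod_channel_prob by (intro prod_nonneg) (auto intro: channel_prob_nonneg)

lemma sum_instances_prod:
  fixes W :: "'x \<Rightarrow> 'y::finite \<Rightarrow> real"
  shows "(\<Sum>Y\<in>instances M N n. inst_prob W C M N n Y * (\<Prod>d\<in>{..<M} \<times> {..<N}. g d (Y d)))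
     = (\<Prod>d\<in>{..<M} \<times> {..<N}. \<Sum>u\<in>{u. length u = n}. channel_prob W n (C (fst d)) u * g d u)"
proof -
  have "(\<Sum>Y\<in>instances M N n. inst_prob W C M N n Y * (\<Prod>d\<in>{..<M} \<times> {..<N}. g d (Y d)))
      = (\<Sum>Y\<in>instances M N n. \<Prod>d\<in>{..<M} \<times> {..<N}. channel_prob W n (C (fst d)) (Y d) * g d (Y d))"
    unfolding inst_prob_eq_prod_channel_prob by (simp add: prod.distrib)
  also have "\<dots> = (\<Prod>d\<in>{..<M} \<times> {..<N}. \<Sum>u\<in>{u. length u = n}. channel_prob W n (C (fst d)) u * g d u)"
    unfolding instances_def by (rule prod_sum_PiE[symmetric]) (auto intro: finite_lists_length)
  finally show ?thesis .
qed

lemma card_pairs_fst_eq: "m < M \<Longrightarrow> card {d\<in>{..<M} \<times> {..<N}. fst d = m} = N"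
proof -
  assume "m < M"
  then have "{d\<in>{..<M} \<times> {..<N}. fst d = m} = Pair m ` {..<N}"
    by auto
  then show ?thesis
    by (simp add: card_image inj_on_def)
qed

lemma cloud_count_eq_card_pairs:
  assumes "m < M"
  shows "cloud_count N Y m y = card {d\<in>{..<M} \<times> {..<N}. fst d = m \<and> Y d = y}"
proof -
  have "{d\<in>{..<M} \<times> {..<N}. fst d = m \<and> Y d = y} = Pair m ` {j. j < N \<and> Y (m, j) = y}"
    using assms by auto
  then show ?thesis
    unfolding cloud_count_def by (simp add: card_image inj_on_def)
qed

context
  fixes W :: "'x \<Rightarrow> 'y::finite \<Rightarrow> real"
  assumes W_sum: "\<And>x. (\<Sum>y\<in>UNIV. W x y) = 1"
begin

lemma sum_inst_prob: "(\<Sum>Y\<in>instances M N n. inst_prob W C M N n Y) = 1"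
  using sum_instances_prod[where g = "\<lambda>_ _. 1" and M = M and N = N and n = n and W = W and C = C]
  by (simp add: sum_channel_prob W_sum)

lemma sum_inst_prob_component:
  assumes d0: "d0 \<in> {..<M} \<times> {..<N}"
  shows "(\<Sum>Y\<in>instances M N n. inst_prob W C M N n Y * h (Y d0))
       = (\<Sum>u\<in>{u. length u = n}. channel_prob W n (C (fst d0)) u * h u)"
proof -
  have "(\<Sum>Y\<in>instances M N n. inst_prob W C M N n Y * h (Y d0))
      = (\<Prod>d\<in>{..<M} \<times> {..<N}. \<Sum>u\<in>{u. length u = n}.
           channel_prob W n (C (fst d)) u * (if d = d0 then h u else 1))"
    using sum_instances_prod[where g = "\<lambda>d u. if d = d0 then h u else 1"
        and M = M and N = N and n = n and W = W and C = C] d0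
    by (simp add: prod.delta')
  also have "\<dots> = (\<Prod>d\<in>{..<M} \<times> {..<N}.
      if d = d0 then (\<Sum>u\<in>{u. length u = n}. channel_prob W n (C (fst d0)) u * h u) else 1)"
    by (rule prod.cong) (auto simp: sum_channel_prob W_sum)
  also have "\<dots> = (\<Sum>u\<in>{u. length u = n}. channel_prob W n (C (fst d0)) u * h u)"
    using d0 by (simp add: prod.delta')
  finally show ?thesis .
qed

lemma sum_inst_prob_exp_cloud_count:
  assumes m: "m < M" and y: "length y = n"
  shows "(\<Sum>Y\<in>instances M N n. inst_prob W C M N n Y * exp (real (cloud_count N Y m y)))
       = (1 + (exp 1 - 1) * channel_prob W n (C m) y) ^ N"
proof -
  have exp_cloud_count: "exp (real (cloud_count N Y m y))
      = (\<Prod>d\<in>{..<M} \<times> {..<N}. (\<lambda>d u. if fst d = m \<and> u = y then exp 1 else 1) d (Y d))" for Y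
    by (simp add: cloud_count_eq_card_pairs[OF m] prod.If_cases Int_def mult.commute
        flip: exp_of_nat_mult)
  have "(\<Sum>Y\<in>instances M N n. inst_prob W C M N n Y * exp (real (cloud_count N Y m y)))
      = (\<Prod>d\<in>{..<M} \<times> {..<N}. \<Sum>u\<in>{u. length u = n}.
           channel_prob W n (C (fst d)) u * (if fst d = m \<and> u = y then exp 1 else 1))"
    unfolding exp_cloud_count by (rule sum_instances_prod)
  also have "\<dots> = (\<Prod>d\<in>{..<M} \<times> {..<N}.
      if fst d = m then 1 + (exp 1 - 1) * channel_prob W n (C m) y else 1)"
  proof (rule prod.cong[OF refl])
    fix d :: "nat \<times> nat"
    have "(\<Sum>u\<in>{u. length u = n}. channel_prob W n (C m) u * (if u = y then exp 1 else 1))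
        = (\<Sum>u\<in>{u. length u = n}.
            channel_prob W n (C m) u
            + (if u = y then (exp 1 - 1) * channel_prob W n (C m) y else 0))"
      by (rule sum.cong) (auto simp: algebra_simps)
    also have "\<dots> = 1 + (exp 1 - 1) * channel_prob W n (C m) y"
      using y by (simp add: sum.distrib sum_channel_prob W_sum finite_lists_length)
    finally show "(\<Sum>u\<in>{u. length u = n}.
          channel_prob W n (C (fst d)) u * (if fst d = m \<and> u = y then exp 1 else 1))
        = (if fst d = m then 1 + (exp 1 - 1) * channel_prob W n (C m) y else 1)"
      by (cases "fst d = m") (simp_all add: sum_channel_prob W_sum)
  qed
  also have "\<dots> = (1 + (exp 1 - 1) * channel_prob W n (C m) y) ^ N"
    by (simp add: prod.If_cases Int_def card_pairs_fst_eq[OF m])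
  finally show ?thesis .
qed

end

lemma event_prob_eq_sum_channel_prob:
  fixes W :: "'x \<Rightarrow> 'y::finite \<Rightarrow> real" and n :: nat and R K :: real
  defines "M \<equiv> num_msgs n R" and "N \<equiv> cloud_size n K"
  assumes W_sum: "\<And>x. (\<Sum>y\<in>UNIV. W x y) = 1" and N_pos: "N > 0"
  shows "event_prob W n R K C Q
    = (\<Sum>m<M. \<Sum>u\<in>{u. length u = n}.
         if joint_type (C m) u = Q then channel_prob W n (C m) u else 0) / real M"
proof -
  define p where "p m = (\<Sum>u\<in>{u. length u = n}.
      if joint_type (C m) u = Q then channel_prob W n (C m) u else 0)" for m
  have "(\<Sum>Y\<in>instances M N n.
        if joint_type (C m) (Y (m, j)) = Q then inst_prob W C M N n Y / (real M * real N) else 0)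
      = p m / (real M * real N)" if "m < M" "j < N" for m j
  proof -
    have "(\<Sum>Y\<in>instances M N n.
          if joint_type (C m) (Y (m, j)) = Q then inst_prob W C M N n Y / (real M * real N) else 0)
        = (\<Sum>Y\<in>instances M N n.
            inst_prob W C M N n Y * (if joint_type (C m) (Y (m, j)) = Q then 1 else 0))
          / (real M * real N)"
      unfolding sum_divide_distrib by (intro sum.cong) auto
    also have "(\<Sum>Y\<in>instances M N n.
          inst_prob W C M N n Y * (if joint_type (C m) (Y (m, j)) = Q then 1 else 0))
        = (\<Sum>u\<in>{u. length u = n}.
            channel_prob W n (C m) u * (if joint_type (C m) u = Q then 1 else 0))"
      using sum_inst_prob_component[OF W_sum, of "(m, j)" M N] that by simp
    also have "\<dots> = p m"
      unfolding p_def by (intro sum.cong) auto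
    finally show ?thesis .
  qed
  then have "event_prob W n R K C Q = (\<Sum>m<M. \<Sum>j<N. p m / (real M * real N))"
    unfolding event_prob_def Let_def M_def[symmetric] N_def[symmetric] by (intro sum.cong refl) auto
  also have "\<dots> = (\<Sum>m<M. p m) / real M"
    using N_pos by (simp add: sum_divide_distrib)
  finally show ?thesis
    unfolding p_def .
qed

lemma event_prob_pos_obtain_joint_type:
  fixes Q :: "'x \<times> 'y \<Rightarrow> real"
  assumes "event_prob W n R K C Q > 0"
  obtains m u where "m < num_msgs n R" "length u = n" "joint_type (C m) u = Q"
proof -
  have "\<exists>m u. m < num_msgs n R \<and> length u = n \<and> joint_type (C m) u = Q"
  proof (rule ccontr)
    assume none: "\<nexists>m u. m < num_msgs n R \<and> length u = n \<and> joint_type (C m) u = Q"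
    have "event_prob W n R K C Q = 0"
      unfolding event_prob_def Let_def
    proof (intro sum.neutral ballI)
      fix m j and Y :: "nat \<times> nat \<Rightarrow> 'y list"
      assume "m \<in> {..<num_msgs n R}" "j \<in> {..<cloud_size n K}"
        "Y \<in> instances (num_msgs n R) (cloud_size n K) n"
      then have "m < num_msgs n R" "length (Y (m, j)) = n"
        by (auto simp: instances_def PiE_iff)
      then show "(if joint_type (C m) (Y (m, j)) = Q
          then inst_prob W C (num_msgs n R) (cloud_size n K) n Y
            / (real (num_msgs n R) * real (cloud_size n K))
          else 0) = 0"
        using none by auto
    qed
    then show False
      using assms by simp
  qed
  then show ?thesis
    using that by blast
qed

section \<open>Correct decoding by the ML decoder\<close>

lemma ml_correct_nonneg: "ml_correct M N Y u m \<ge> 0"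
  by (simp add: ml_correct_def)

lemma ml_correct_le_1: "ml_correct M N Y u m \<le> 1"
proof (cases "m \<in> ml_set M N Y u")
  case True
  then have "card (ml_set M N Y u) > 0"
    by (auto simp: card_gt_0_iff ml_set_def)
  then show ?thesis
    using True by (simp add: ml_correct_def)
qed (simp add: ml_correct_def)

lemma sum_ml_correct_le_1: "(\<Sum>m<M. ml_correct M N Y u m) \<le> 1"
proof -
  have "ml_set M N Y u \<subseteq> {..<M}"
    by (auto simp: ml_set_def)
  then have "(\<Sum>m<M. ml_correct M N Y u m)
      = real (card (ml_set M N Y u)) * (1 / real (card (ml_set M N Y u)))"
    by (simp add: ml_correct_def sum.If_cases Int_absorb1)
  then show ?thesis
    by (cases "card (ml_set M N Y u) = 0") auto
qed

lemma sum_le_soft_max: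
  fixes c q :: "'a \<Rightarrow> real"
  assumes "finite F" and "\<And>m. q m \<ge> 0" and "(\<Sum>m\<in>F. q m) \<le> 1" and "\<And>m. c m \<ge> 0"
    and "\<exists>m\<in>F. P m"
  shows "(\<Sum>m\<in>F. c m * (if P m then q m else 0)) \<le> t + (\<Sum>m\<in>F. if P m then exp (c m - t) else 0)"
proof -
  define G where "G = t + (\<Sum>m\<in>F. if P m then exp (c m - t) else 0)"
  have c_le_G: "c m \<le> G" if "m \<in> F" "P m" for m
  proof -
    have "exp (c m - t) \<le> (\<Sum>m\<in>F. if P m then exp (c m - t) else 0)"
      using member_le_sum[of m F "\<lambda>m. if P m then exp (c m - t) else 0"] that assms(1) by auto
    moreover have "c m - t \<le> exp (c m - t)"
      using exp_ge_add_one_self[of "c m - t"] by linarith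
    ultimately show ?thesis
      unfolding G_def by linarith
  qed
  then have G_nonneg: "G \<ge> 0"
    using assms(4,5) by (meson order_trans)
  have "(\<Sum>m\<in>F. c m * (if P m then q m else 0)) \<le> (\<Sum>m\<in>F. G * q m)"
    using c_le_G assms(2) G_nonneg by (intro sum_mono) (auto intro: mult_right_mono)
  also have "\<dots> \<le> G"
    using assms(3) G_nonneg by (simp add: mult_left_le flip: sum_distrib_left)
  finally show ?thesis
    unfolding G_def .
qed

lemma sum_cloud_eq_sum_cloud_count:
  assumes "\<And>j. j < N \<Longrightarrow> Y (m, j) \<in> L" and "finite L"
  shows "(\<Sum>j<N. f (Y (m, j))) = (\<Sum>u\<in>L. real (cloud_count N Y m u) * f u)"
proof -
  have "real (cloud_count N Y m u) = (\<Sum>j<N. if Y (m, j) = u then 1 else 0)" for u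
    unfolding cloud_count_def by (simp add: sum.If_cases Int_def conj_commute)
  then have "(\<Sum>u\<in>L. real (cloud_count N Y m u) * f u)
      = (\<Sum>u\<in>L. \<Sum>j<N. (if Y (m, j) = u then 1 else 0) * f u)"
    by (simp add: sum_distrib_right)
  also have "\<dots> = (\<Sum>u\<in>L. \<Sum>j<N. if Y (m, j) = u then f u else 0)"
    by (intro sum.cong refl) simp
  also have "\<dots> = (\<Sum>j<N. \<Sum>u\<in>L. if Y (m, j) = u then f u else 0)"
    by (rule sum.swap)
  also have "\<dots> = (\<Sum>j<N. f (Y (m, j)))"
    using assms by (intro sum.cong refl) (simp add: sum.delta)
  finally show ?thesis ..
qed

lemma ml_correct_count_le:
  fixes Y :: "nat \<times> nat \<Rightarrow> 'y::finite list"
  assumes "Y \<in> instances M N n"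
  shows "(\<Sum>m<M. \<Sum>j<N. if S m (Y (m, j)) then ml_correct M N Y (Y (m, j)) m else 0)
    \<le> (\<Sum>u\<in>{u. length u = n}. if \<exists>m<M. S m u
          then t + (\<Sum>m<M. if S m u then exp (real (cloud_count N Y m u) - t) else 0) else 0)"
proof -
  let ?L = "{u :: 'y list. length u = n}"
  have "(\<Sum>m<M. \<Sum>j<N. if S m (Y (m, j)) then ml_correct M N Y (Y (m, j)) m else 0)
      = (\<Sum>m<M. \<Sum>u\<in>?L. real (cloud_count N Y m u) * (if S m u then ml_correct M N Y u m else 0))"
    using assms unfolding instances_def
    by (intro sum.cong refl sum_cloud_eq_sum_cloud_count finite_lists_length) (auto simp: PiE_iff)
  also have "\<dots> = (\<Sum>u\<in>?L. \<Sum>m<M.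
      real (cloud_count N Y m u) * (if S m u then ml_correct M N Y u m else 0))"
    by (rule sum.swap)
  also have "\<dots> \<le> (\<Sum>u\<in>?L. if \<exists>m<M. S m u
          then t + (\<Sum>m<M. if S m u then exp (real (cloud_count N Y m u) - t) else 0) else 0)"
  proof (rule sum_mono)
    fix u
    show "(\<Sum>m<M. real (cloud_count N Y m u) * (if S m u then ml_correct M N Y u m else 0))
        \<le> (if \<exists>m<M. S m u
            then t + (\<Sum>m<M. if S m u then exp (real (cloud_count N Y m u) - t) else 0) else 0)"
    proof (cases "\<exists>m<M. S m u")
      case True
      then show ?thesis
        by (simp, intro sum_le_soft_max) (auto simp: ml_correct_nonneg sum_ml_correct_le_1)
    qed auto
  qed
  finally show ?thesis .
qed

lemma expected_soft_max_le:
  fixes W :: "'x \<Rightarrow> 'y::finite \<Rightarrow> real" and N :: nat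
  assumes W_nonneg: "\<And>x y. W x y \<ge> 0" and W_sum: "\<And>x. (\<Sum>y\<in>UNIV. W x y) = 1"
    and u: "length u = n" and M_pos: "M > 0" and P_nonneg: "P \<ge> 0"
    and prob_le: "\<And>m. m < M \<Longrightarrow> S m \<Longrightarrow> channel_prob W n (C m) u \<le> P"
  defines "t \<equiv> (exp 1 - 1) * P * real N + ln (real M)"
  shows "(\<Sum>Y\<in>instances M N n. inst_prob W C M N n Y
            * (t + (\<Sum>m<M. if S m then exp (real (cloud_count N Y m u) - t) else 0))) \<le> t + 1"
proof -
  let ?\<pi> = "inst_prob W C M N n"
  have "(\<Sum>Y\<in>instances M N n.
          ?\<pi> Y * (t + (\<Sum>m<M. if S m then exp (real (cloud_count N Y m u) - t) else 0)))
      = t * (\<Sum>Y\<in>instances M N n. ?\<pi> Y)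
        + (\<Sum>m<M. if S m
            then exp (- t) * (\<Sum>Y\<in>instances M N n. ?\<pi> Y * exp (real (cloud_count N Y m u)))
            else 0)"
    by (simp add: algebra_simps sum.distrib sum_distrib_left sum_distrib_right exp_diff exp_minus
        divide_inverse if_distrib sum.swap[of _ "{..<M}"] cong: if_cong)
      (auto intro!: sum.cong)
  also have "\<dots> = t + (\<Sum>m<M.
      if S m then exp (- t) * (1 + (exp 1 - 1) * channel_prob W n (C m) u) ^ N else 0)"
    using u by (simp add: sum_inst_prob W_sum)
      (auto intro!: sum.cong simp: sum_inst_prob_exp_cloud_count W_sum)
  also have "\<dots> \<le> t + (\<Sum>m<M. exp (- t) * exp ((exp 1 - 1) * P * real N))"
  proof (intro add_left_mono sum_mono)
    fix m assume m: "m \<in> {..<M}"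
    have e1: "exp 1 - 1 \<ge> (0::real)"
      using exp_ge_add_one_self[of 1] by simp
    have "(1 + (exp 1 - 1) * channel_prob W n (C m) u) ^ N \<le> exp ((exp 1 - 1) * P) ^ N"
      if "S m"
    proof (rule power_mono)
      show "1 + (exp 1 - 1) * channel_prob W n (C m) u \<le> exp ((exp 1 - 1) * P)"
        using prob_le[of m] m that e1
        by (intro order.trans[OF _ exp_ge_add_one_self] add_left_mono mult_left_mono) auto
      show "0 \<le> 1 + (exp 1 - 1) * channel_prob W n (C m) u"
        using e1 channel_prob_nonneg[of W, OF W_nonneg] by simp
    qed
    then show "(if S m then exp (- t) * (1 + (exp 1 - 1) * channel_prob W n (C m) u) ^ N else 0)
        \<le> exp (- t) * exp ((exp 1 - 1) * P * real N)"
      by (auto simp: exp_of_nat_mult[symmetric] mult_ac)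
  qed
  also have "\<dots> = t + real M * exp (- ln (real M))"
    by (simp add: t_def flip: exp_add)
  also have "\<dots> = t + 1"
    using M_pos by (simp add: exp_minus)
  finally show ?thesis .
qed

lemma correct_event_prob_eq_sum_instances:
  fixes n :: nat and R K :: real
  defines "M \<equiv> num_msgs n R" and "N \<equiv> cloud_size n K"
  shows "correct_event_prob W n R K C Q
    = (\<Sum>Y\<in>instances M N n. inst_prob W C M N n Y
         * (\<Sum>m<M. \<Sum>j<N.
              if joint_type (C m) (Y (m, j)) = Q then ml_correct M N Y (Y (m, j)) m else 0))
      / (real M * real N)"
  unfolding correct_event_prob_def Let_def M_def[symmetric] N_def[symmetric]
  by (simp add: sum_divide_distrib sum_distrib_left sum.swap[of _ "instances M N n"])
    (auto intro!: sum.cong)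

lemma correct_event_prob_le:
  fixes W :: "'x \<Rightarrow> 'y::finite \<Rightarrow> real" and n :: nat and R K :: real
  defines "M \<equiv> num_msgs n R" and "N \<equiv> cloud_size n K"
  assumes W_nonneg: "\<And>x y. W x y \<ge> 0" and W_sum: "\<And>x. (\<Sum>y\<in>UNIV. W x y) = 1"
    and M_pos: "M > 0" and P_nonneg: "P \<ge> 0"
    and prob_le: "\<And>m u. m < M \<Longrightarrow> length u = n \<Longrightarrow> joint_type (C m) u = Q
      \<Longrightarrow> channel_prob W n (C m) u \<le> P"
  shows "correct_event_prob W n R K C Q
    \<le> card {u. length u = n \<and> (\<exists>m<M. joint_type (C m) u = Q)}
        * ((exp 1 - 1) * P * real N + ln (real M) + 1) / (real M * real N)"
proof -
  let ?I = "instances M N n :: (nat \<times> nat \<Rightarrow> 'y list) set"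
  let ?L = "{u :: 'y list. length u = n}"
  let ?\<pi> = "inst_prob W C M N n"
  let ?S = "\<lambda>m u. joint_type (C m) u = Q"
  let ?E = "\<lambda>u. \<exists>m<M. ?S m u"
  define t where "t = (exp 1 - 1) * P * real N + ln (real M)"
  define B where "B Y u = (if ?E u
      then t + (\<Sum>m<M. if ?S m u then exp (real (cloud_count N Y m u) - t) else 0) else 0)"
    for Y u
  have "correct_event_prob W n R K C Q
      = (\<Sum>Y\<in>?I. ?\<pi> Y * (\<Sum>m<M. \<Sum>j<N. if ?S m (Y (m, j)) then ml_correct M N Y (Y (m, j)) m else 0))
        / (real M * real N)"
    unfolding M_def N_def by (rule correct_event_prob_eq_sum_instances)
  also have "\<dots> \<le> (\<Sum>Y\<in>?I. ?\<pi> Y * (\<Sum>u\<in>?L. B Y u)) / (real M * real N)"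
    unfolding B_def
    by (intro divide_right_mono sum_mono mult_left_mono ml_correct_count_le inst_prob_nonneg
        W_nonneg) auto
  also have "\<dots> = (\<Sum>u\<in>?L. \<Sum>Y\<in>?I. ?\<pi> Y * B Y u) / (real M * real N)"
    by (simp add: sum_distrib_left sum.swap[of _ ?L])
  also have "\<dots> \<le> (\<Sum>u\<in>?L. if ?E u then t + 1 else 0) / (real M * real N)"
  proof (intro divide_right_mono sum_mono)
    fix u assume u: "u \<in> ?L"
    show "(\<Sum>Y\<in>?I. ?\<pi> Y * B Y u) \<le> (if ?E u then t + 1 else 0)"
    proof (cases "?E u")
      case True
      then show ?thesis
        unfolding B_def t_def using u prob_le
        by (simp, intro expected_soft_max_le W_nonneg W_sum M_pos P_nonneg) auto
    next
      case False
      then have "B Y u = 0" for Y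
        unfolding B_def by meson
      with False show ?thesis
        by auto
    qed
  qed simp
  also have "\<dots> = card {u. length u = n \<and> ?E u} * (t + 1) / (real M * real N)"
    by (simp add: sum.If_cases finite_lists_length Int_def)
  finally show ?thesis
    unfolding t_def .
qed

section \<open>Constant composition codebooks\<close>

lemma event_prob_constant_composition:
  fixes W :: "'x::finite \<Rightarrow> 'y::finite \<Rightarrow> real" and Cm :: "('x \<times> 'y) multiset" and R K :: real
  defines "n \<equiv> size Cm" and "M \<equiv> num_msgs (size Cm) R"
  assumes W_sum: "\<And>x. (\<Sum>y\<in>UNIV. W x y) = 1"
    and "cloud_size n K > 0" and "M > 0" and "n > 0"
    and composition: "\<And>m. m < M \<Longrightarrow> mset (C m) = image_mset fst Cm"
  shows "event_prob W n R K C (\<lambda>p. real (count Cm p) / real n)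
    = (\<Prod>a\<in>UNIV. card (permutations_of_multiset (fiber Cm a)))
      * (\<Prod>p\<in>UNIV. case_prod W p ^ count Cm p)"
proof -
  let ?G = "\<Prod>a\<in>UNIV. card (permutations_of_multiset (fiber Cm a))"
  let ?P = "\<Prod>p\<in>UNIV. case_prod W p ^ count Cm p"
  have "(\<Sum>u\<in>{u. length u = n}. if joint_type (C m) u = (\<lambda>p. real (count Cm p) / real n)
          then channel_prob W n (C m) u else 0) = ?G * ?P" if m: "m < M" for m
  proof -
    have len: "length (C m) = n"
      using arg_cong[OF composition[OF m], of size] by (simp add: n_def)
    let ?T = "{u. length u = length (C m) \<and> mset (zip (C m) u) = Cm}"
    have "(\<Sum>u\<in>{u. length u = n}. if joint_type (C m) u = (\<lambda>p. real (count Cm p) / real n)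
          then channel_prob W n (C m) u else 0)
        = (\<Sum>u\<in>{u\<in>{u. length u = n}. joint_type (C m) u = (\<lambda>p. real (count Cm p) / real n)}.
            channel_prob W n (C m) u)"
      by (rule sum.inter_filter[symmetric, OF finite_lists_length])
    also have "{u\<in>{u. length u = n}. joint_type (C m) u = (\<lambda>p. real (count Cm p) / real n)} = ?T"
      using len \<open>n > 0\<close> by (auto simp: joint_type_eq_iff_mset_zip)
    also have "(\<Sum>u\<in>?T. channel_prob W n (C m) u) = (\<Sum>u\<in>?T. ?P)"
      using len by (intro sum.cong) (auto simp: channel_prob_eq_prod_power_count)
    also have "\<dots> = ?G * ?P"
      using card_conditional_type_class[OF composition[OF m]] by simp
    finally show ?thesis .
  qed
  then show ?thesis
    unfolding event_prob_eq_sum_channel_prob[OF W_sum \<open>cloud_size n K > 0\<close>]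
    using \<open>M > 0\<close> by (simp add: M_def n_def)
qed

lemma nat_floor_exp_bounds:
  assumes "t \<ge> (0::real)"
  shows "exp t / 2 \<le> real (nat \<lfloor>exp t\<rfloor>)" and "real (nat \<lfloor>exp t\<rfloor>) \<le> exp t"
proof -
  have "1 \<le> exp t"
    using assms by simp
  then have eq: "real (nat \<lfloor>exp t\<rfloor>) = real_of_int \<lfloor>exp t\<rfloor>" and ge_1: "1 \<le> real_of_int \<lfloor>exp t\<rfloor>"
    by simp_all
  have "exp t - 1 < real_of_int \<lfloor>exp t\<rfloor>"
    by linarith
  then show "exp t / 2 \<le> real (nat \<lfloor>exp t\<rfloor>)"
    using eq ge_1 by linarith
  show "real (nat \<lfloor>exp t\<rfloor>) \<le> exp t"
    using eq by linarith
qed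

lemma decoding_factor_le:
  fixes n :: nat and M N P B R K :: real
  assumes P: "P = exp (- (n * B))" and M_ge: "exp (n * R) / 2 \<le> M" and M_le: "M \<le> exp (n * R)"
    and N_ge: "exp (n * K) / 2 \<le> N" and R_nonneg: "R \<ge> 0"
  shows "((exp 1 - 1) * P * N + ln M + 1) / (M * N * P)
    \<le> exp (ln (4 * (R + 2)) + ln (real n + 1) - n * (R - max 0 (B - K)))"
proof -
  have "exp (n * R) > 0" "exp (n * K) > 0"
    by simp_all
  then have M_pos: "M > 0" and N_pos: "N > 0" and P_pos: "P > 0"
    using M_ge N_ge P by (linarith, linarith, simp)
  define E where "E = exp (n * (R - max 0 (B - K)))"
  have E_pos: "E > 0"
    by (simp add: E_def)
  have "E \<le> exp (n * R)"
    by (simp add: E_def mult_left_mono)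
  then have M_ge_E: "E / 2 \<le> M"
    using M_ge by simp
  have "n * (B - K) \<le> n * max 0 (B - K)"
    by (intro mult_left_mono) auto
  then have "E \<le> exp (n * R) * exp (n * K) * exp (- (n * B))"
    by (simp add: E_def algebra_simps flip: exp_add)
  also have "\<dots> \<le> (2 * M) * (2 * N) * P"
    using M_ge N_ge P M_pos N_pos by (intro mult_mono) auto
  finally have MNP_ge_E: "E / 4 \<le> M * N * P"
    by simp
  have ln_M: "ln M \<le> n * R"
    using M_le M_pos by (metis ln_exp ln_le_cancel_iff exp_gt_zero)
  have "((exp 1 - 1) * P * N + ln M + 1) / (M * N * P) = (exp 1 - 1) / M + (ln M + 1) / (M * N * P)"
    using M_pos N_pos P_pos by (simp add: field_simps)
  also have "(exp 1 - 1) / M \<le> 2 / (E / 2)"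
    using exp_le M_ge_E E_pos by (intro frac_le) auto
  also have "(ln M + 1) / (M * N * P) \<le> (n * R + 1) / (E / 4)"
    using ln_M MNP_ge_E E_pos R_nonneg by (intro frac_le) auto
  also have "2 / (E / 2) + (n * R + 1) / (E / 4) = 4 * (n * R + 2) / E"
    using E_pos by (simp add: field_simps)
  also have "\<dots> \<le> 4 * (R + 2) * (real n + 1) / E"
    using E_pos R_nonneg by (intro divide_right_mono) (auto simp: algebra_simps)
  also have "\<dots> = exp (ln (4 * (R + 2)) + ln (real n + 1) - n * (R - max 0 (B - K)))"
    using R_nonneg by (simp add: E_def exp_add exp_diff)
  finally show ?thesis
    by simp
qed

lemma constant_composition_obtain_joint_counts:
  fixes C :: "nat \<Rightarrow> 'x list" and Q :: "'x \<times> 'y \<Rightarrow> real"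
  assumes cc: "cc_codebook n R C" and ev_pos: "event_prob W n R K C Q > 0" and n_pos: "n > 0"
  obtains Cm where "size Cm = n" and "Q = (\<lambda>p. real (count Cm p) / real n)"
    and "\<And>m. m < num_msgs n R \<Longrightarrow> mset (C m) = image_mset fst Cm"
proof -
  obtain m0 u0 where m0: "m0 < num_msgs n R" and u0: "length u0 = n"
    and Q: "joint_type (C m0) u0 = Q"
    using ev_pos by (rule event_prob_pos_obtain_joint_type)
  have len: "length (C m) = n" and type: "seq_type (C m) = seq_type (C 0)"
    if "m < num_msgs n R" for m
    using cc that unfolding cc_codebook_def by blast+
  define Cm where "Cm = mset (zip (C m0) u0)"
  show thesis
  proof
    show "size Cm = n"
      using len[OF m0] u0 by (simp add: Cm_def)
    show "Q = (\<lambda>p. real (count Cm p) / real n)"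
      using joint_type_eq_count[OF len[OF m0] u0] Q by (simp add: Cm_def)
    fix m assume m: "m < num_msgs n R"
    have "mset (C m) = mset (C m0)"
      using len[OF m] len[OF m0] n_pos type[OF m] type[OF m0]
      by (intro seq_type_eq_imp_mset_eq) auto
    also have "\<dots> = image_mset fst Cm"
      using len[OF m0] u0 by (simp add: Cm_def flip: mset_map)
    finally show "mset (C m) = image_mset fst Cm" .
  qed
qed

lemma card_permutations_of_multiset_pos: "card (permutations_of_multiset A) > 0"
  by (simp add: card_gt_0_iff)

lemma type_classes_ratio_le_exp_mutual_info:
  fixes Cm :: "('x::finite \<times> 'y::finite) multiset"
  defines "n \<equiv> size Cm"
  assumes "n > 0"
  shows "card (permutations_of_multiset (image_mset snd Cm))
           / (\<Prod>a\<in>UNIV. card (permutations_of_multiset (fiber Cm a)))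
         \<le> exp (real n * mutual_info (\<lambda>p. real (count Cm p) / real n)
                 + (1 + real (CARD('x) * CARD('y))) * (1 + ln (real n + 1)))"
proof -
  let ?A = "card (permutations_of_multiset (image_mset snd Cm))"
  let ?G = "\<Prod>a\<in>UNIV. card (permutations_of_multiset (fiber Cm a))"
  have G_pos: "real ?G > 0"
    unfolding of_nat_prod by (intro prod_pos) (simp add: card_permutations_of_multiset_pos)
  have ln_G: "ln ?G = (\<Sum>a\<in>UNIV. ln (card (permutations_of_multiset (fiber Cm a))))"
    unfolding of_nat_prod by (simp add: ln_prod card_permutations_of_multiset_pos)
  from G_pos have "?A / ?G = exp (ln ?A - ln ?G)"
    by (simp add: exp_diff card_permutations_of_multiset_pos)
  also have "\<dots> \<le> exp (real n * mutual_info (\<lambda>p. real (count Cm p) / real n)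
                 + (1 + real (CARD('x) * CARD('y))) * (1 + ln (real n + 1)))"
    using ln_card_type_classes_le_mutual_info[of Cm] assms(2) unfolding ln_G n_def by simp
  finally show ?thesis .
qed

lemma card_joint_type_outputs_le:
  fixes Cm :: "('x \<times> 'y) multiset"
  defines "n \<equiv> size Cm"
  assumes "n > 0" and composition: "\<And>m. m < M \<Longrightarrow> mset (C m) = image_mset fst Cm"
  shows "card {u. length u = n \<and> (\<exists>m<M. joint_type (C m) u = (\<lambda>p. real (count Cm p) / real n))}
    \<le> card (permutations_of_multiset (image_mset snd Cm))"
proof (intro card_mono subsetI)
  fix u
  assume "u \<in> {u. length u = n \<and> (\<exists>m<M. joint_type (C m) u = (\<lambda>p. real (count Cm p) / real n))}"
  then obtain m where u: "length u = n" and m: "m < M"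
    and "joint_type (C m) u = (\<lambda>p. real (count Cm p) / real n)"
    by blast
  moreover have len: "length (C m) = n"
    using arg_cong[OF composition[OF m], of size] by (simp add: n_def)
  ultimately have "mset (zip (C m) u) = Cm"
    using \<open>n > 0\<close> by (simp add: joint_type_eq_iff_mset_zip)
  then show "u \<in> permutations_of_multiset (image_mset snd Cm)"
    using len u by (auto simp: permutations_of_multiset_def simp flip: mset_map)
qed simp

lemma correct_event_ratio_le_type_classes:
  fixes W :: "'x::finite \<Rightarrow> 'y::finite \<Rightarrow> real" and Cm :: "('x \<times> 'y) multiset" and R K :: real
  defines "n \<equiv> size Cm" and "M \<equiv> num_msgs (size Cm) R" and "N \<equiv> cloud_size (size Cm) K"
    and "Q \<equiv> \<lambda>p. real (count Cm p) / real (size Cm)"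
  defines "P \<equiv> exp (- (real n * B_val W Q))"
  assumes W_nonneg: "\<And>x y. W x y \<ge> 0" and W_sum: "\<And>x. (\<Sum>y\<in>UNIV. W x y) = 1"
    and n_pos: "n > 0" and M_pos: "M > 0" and N_pos: "N > 0"
    and composition: "\<And>m. m < M \<Longrightarrow> mset (C m) = image_mset fst Cm"
    and ev_pos: "event_prob W n R K C Q > 0"
  shows "correct_event_prob W n R K C Q / event_prob W n R K C Q
    \<le> card (permutations_of_multiset (image_mset snd Cm))
         / (\<Prod>a\<in>UNIV. card (permutations_of_multiset (fiber Cm a)))
       * (((exp 1 - 1) * P * N + ln M + 1) / (real M * real N * P))"
proof -
  let ?A = "card (permutations_of_multiset (image_mset snd Cm))"
  let ?G = "\<Prod>a\<in>UNIV. card (permutations_of_multiset (fiber Cm a))"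
  let ?F = "(exp 1 - 1) * P * N + ln M + 1"
  have ev: "event_prob W n R K C Q = ?G * (\<Prod>p\<in>UNIV. case_prod W p ^ count Cm p)"
    unfolding n_def Q_def using W_sum N_pos M_pos n_pos composition
    by (intro event_prob_constant_composition) (simp_all add: n_def M_def N_def)
  have G_pos: "real ?G > 0"
    unfolding of_nat_prod by (intro prod_pos) (simp add: card_permutations_of_multiset_pos)
  then have "(\<Prod>p\<in>UNIV. case_prod W p ^ count Cm p) > 0"
    by (rule zero_less_mult_pos[OF ev_pos[unfolded ev]])
  then have P_eq: "(\<Prod>p\<in>UNIV. case_prod W p ^ count Cm p) = P"
    unfolding P_def Q_def n_def
    by (intro prod_power_count_eq_exp_B_val W_nonneg) (use n_pos n_def in auto)
  have P_pos: "P > 0"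
    by (simp add: P_def)
  have "correct_event_prob W n R K C Q
      \<le> card {u. length u = n \<and> (\<exists>m<M. joint_type (C m) u = Q)} * ?F / (real M * real N)"
    unfolding M_def N_def n_def
  proof (intro correct_event_prob_le W_nonneg W_sum)
    fix m u assume "m < num_msgs (size Cm) R" "length u = size Cm" "joint_type (C m) u = Q"
    then show "channel_prob W (size Cm) (C m) u \<le> P"
      using arg_cong[OF composition, of m size] n_pos P_eq unfolding Q_def M_def n_def
      by (simp add: channel_prob_joint_type)
  qed (use M_pos P_pos in \<open>simp_all add: M_def n_def\<close>)
  also have "\<dots> \<le> ?A * ?F / (real M * real N)"
    using card_joint_type_outputs_le[of Cm M C] n_pos composition M_pos N_pos P_pos ln_ge_zero[of M]
    unfolding n_def Q_def by (intro divide_right_mono mult_right_mono) auto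
  finally have "correct_event_prob W n R K C Q / (?G * P) \<le> ?A * ?F / (real M * real N) / (?G * P)"
    by (rule divide_right_mono[OF _ less_imp_le[OF mult_pos_pos[OF G_pos P_pos]]])
  also have "\<dots> = ?A / ?G * (?F / (real M * real N * P))"
    by (simp add: field_simps)
  finally show ?thesis
    unfolding ev P_eq .
qed

lemma correct_event_ratio_le:
  fixes W :: "'x::finite \<Rightarrow> 'y::finite \<Rightarrow> real" and C :: "nat \<Rightarrow> 'x list" and Q :: "'x \<times> 'y \<Rightarrow> real"
  defines "c \<equiv> real (CARD('x) * CARD('y))"
  assumes W_nonneg: "\<And>x y. W x y \<ge> 0" and W_sum: "\<And>x. (\<Sum>y\<in>UNIV. W x y) = 1"
    and R_pos: "R > 0" and K_pos: "K > 0"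
    and cc: "cc_codebook n R C" and ev_pos: "event_prob W n R K C Q > 0" and n_pos: "n > 0"
  shows "correct_event_prob W n R K C Q / event_prob W n R K C Q
    \<le> exp (- real n * (R - mutual_info Q - max 0 (B_val W Q - K))
             + (ln (4 * (R + 2)) + 1 + c + (2 + c) * ln (real n + 1)))"
proof -
  obtain Cm where size: "size Cm = n" and Q: "Q = (\<lambda>p. real (count Cm p) / real n)"
    and composition: "\<And>m. m < num_msgs n R \<Longrightarrow> mset (C m) = image_mset fst Cm"
    using constant_composition_obtain_joint_counts[OF cc ev_pos n_pos] by blast
  define M where "M = num_msgs n R"
  define N where "N = cloud_size n K"
  define P where "P = exp (- (real n * B_val W Q))"
  have M_ge: "exp (real n * R) / 2 \<le> M" and M_le: "M \<le> exp (real n * R)"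
    unfolding M_def num_msgs_def using R_pos by (intro nat_floor_exp_bounds; simp)+
  have N_ge: "exp (real n * K) / 2 \<le> N"
    unfolding N_def cloud_size_def using K_pos by (intro nat_floor_exp_bounds) simp
  have M_pos: "M > 0" and N_pos: "N > 0"
    using M_ge N_ge exp_gt_zero[of "real n * R"] exp_gt_zero[of "real n * K"] by linarith+
  have "correct_event_prob W n R K C Q / event_prob W n R K C Q
      \<le> card (permutations_of_multiset (image_mset snd Cm))
           / (\<Prod>a\<in>UNIV. card (permutations_of_multiset (fiber Cm a)))
         * (((exp 1 - 1) * P * N + ln M + 1) / (real M * real N * P))"
    using correct_event_ratio_le_type_classes[OF W_nonneg W_sum, of Cm R K C] composition ev_pos
      M_pos N_pos n_pos
    unfolding size Q[symmetric] M_def N_def P_def by simp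
  also have "\<dots> \<le> exp (real n * mutual_info Q + (1 + c) * (1 + ln (real n + 1)))
      * exp (ln (4 * (R + 2)) + ln (real n + 1) - real n * (R - max 0 (B_val W Q - K)))"
    using type_classes_ratio_le_exp_mutual_info[of Cm] decoding_factor_le[OF P_def M_ge M_le N_ge]
      n_pos R_pos M_pos N_pos exp_ge_add_one_self[of 1]
    unfolding size Q[symmetric] c_def
    by (intro mult_mono)
      (auto simp: P_def intro!: divide_nonneg_nonneg add_nonneg_nonneg mult_nonneg_nonneg)
  also have "\<dots> = exp (- real n * (R - mutual_info Q - max 0 (B_val W Q - K))
             + (ln (4 * (R + 2)) + 1 + c + (2 + c) * ln (real n + 1)))"
    by (simp add: algebra_simps flip: exp_add)
  finally show ?thesis .
qed

lemma correct_event_prob_le_event_prob: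
  assumes "\<And>x y. W x y \<ge> 0"
  shows "correct_event_prob W n R K C Q \<le> event_prob W n R K C Q"
  unfolding correct_event_prob_def event_prob_def Let_def
proof (intro sum_mono)
  fix m j Y
  let ?p = "inst_prob W C (num_msgs n R) (cloud_size n K) n Y
    / (real (num_msgs n R) * real (cloud_size n K))"
  have "?p * ml_correct (num_msgs n R) (cloud_size n K) Y (Y (m, j)) m \<le> ?p"
    using assms by (intro mult_right_le_one_le divide_nonneg_nonneg inst_prob_nonneg
        ml_correct_nonneg ml_correct_le_1) auto
  then show "(if joint_type (C m) (Y (m, j)) = Q
        then ?p * ml_correct (num_msgs n R) (cloud_size n K) Y (Y (m, j)) m else 0)
      \<le> (if joint_type (C m) (Y (m, j)) = Q then ?p else 0)"
    by simp
qed

theorem lemma8: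
  fixes W :: "'x::finite \<Rightarrow> 'y::finite \<Rightarrow> real" and R K \<epsilon> :: real
  assumes W_nonneg: "\<forall>x y. W x y \<ge> 0"
    and W_sum: "\<forall>x. (\<Sum>y\<in>UNIV. W x y) = 1"
    and R_pos: "R > 0" and K_pos: "K > 0" and eps_pos: "\<epsilon> > 0"
  shows "\<exists>\<delta> :: nat \<Rightarrow> real. \<delta> \<longlonglongrightarrow> 0 \<and>
     (\<forall>n (C :: nat \<Rightarrow> 'x list) (Q :: 'x \<times> 'y \<Rightarrow> real).
        cc_codebook n R C \<and> event_prob W n R K C Q > 0 \<longrightarrow>
        1 - Pe_cond W n R K C Q
          \<le> exp (- real n * (R - mutual_info Q - max 0 (B_val W Q - K) - \<epsilon> + \<delta> n)))"
proof -
  define c where "c = real (CARD('x) * CARD('y))"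
  define \<delta> where
    "\<delta> n = - (ln (4 * (R + 2)) + 1 + c + (2 + c) * ln (real n + 1)) / real n" for n :: nat
  have "\<delta> \<longlonglongrightarrow> 0"
    unfolding \<delta>_def by real_asymp
  moreover have "1 - Pe_cond W n R K C Q
      \<le> exp (- real n * (R - mutual_info Q - max 0 (B_val W Q - K) - \<epsilon> + \<delta> n))"
    if cc: "cc_codebook n R C" and ev_pos: "event_prob W n R K C Q > 0"
    for n C and Q :: "'x \<times> 'y \<Rightarrow> real"
  proof (cases "n = 0")
    case True
    then show ?thesis
      using correct_event_prob_le_event_prob[of W] W_nonneg ev_pos by (simp add: Pe_cond_def)
  next
    case False
    have "1 - Pe_cond W n R K C Q = correct_event_prob W n R K C Q / event_prob W n R K C Q"
      by (simp add: Pe_cond_def)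
    also have "\<dots> \<le> exp (- real n * (R - mutual_info Q - max 0 (B_val W Q - K))
               + (ln (4 * (R + 2)) + 1 + c + (2 + c) * ln (real n + 1)))"
      unfolding c_def using W_nonneg W_sum R_pos K_pos cc ev_pos False
      by (intro correct_event_ratio_le) auto
    \<comment> \<open>the bound already holds with \<open>\<epsilon> = 0\<close>\<close>
    also have "\<dots> \<le> exp (- real n * (R - mutual_info Q - max 0 (B_val W Q - K) - \<epsilon> + \<delta> n))"
      using False eps_pos by (simp add: \<delta>_def field_simps)
    finally show ?thesis .
  qed
  ultimately show ?thesis
    by blast
qed

end
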